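(* Assume $D_1=D_2=D$ and, for $\mu>\mu_{c_1}(D,D)$, define $$A(\mu)=Z(\mu)\Bigl(\frac{D}{\gamma_2\lambda_Z}-f_2'(\lambda_Z)\Bigr)-\lambda_Zf_1'(N(\mu)),$$ where $N(\mu)=N(\mu,D,D)$, $Z(\mu)=Z(\mu,D,D)$, $\lambda_Z=\lambda_Z(D)$. The characteristic polynomial of the Jacobian $J(E_2(\mu))$ of $( * )$ at $E_2(\mu)$ is $(-D-x)\bigl(x^2-A(\mu)x-B(\mu)C(\mu)\bigr)$ with $B(\mu)=-(\lambda_Zf_1'(N(\mu))+D)/\gamma_2$ and $C(\mu)=\gamma_2Z(\mu)f_2'(\lambda_Z)$. (1) If $\frac{D}{\gamma_2\lambda_Z}>f_2'(\lambda_Z)$, then there exists $\mu_{c_2}>\mu_{c_1}(D,D)$ with $A(\mu_{c_2})=0$; at $\mu=\mu_{c_2}$, $J(E_2(\mu_{c_2}))$ has the eigenvalue $-D$ and a pair of nonzero purely imaginary complex conjugate eigenvalues, and for all $\mu$ in a neighborhood of $\mu_{c_2}$, $J(E_2(\mu))$ has the eigenvalue $-D$ and a pair of nonreal complex conjugate eigenvalues with real part $A(\mu)/2$. (2) If in addition $f_1$ is twice differentiable and $f_1''(N(\mu_{c_2}))<0$, then $A'(\mu_{c_2})>0$ (derivative in $\mu$), so the real part of the complex pair crosses zero with positive speed at $\mu_{c_2}$. (3) If in addition $f_1''(N)<0$ for all $N\ge0$, then $\mu_{c_2}$ is the unique zero of $A$ on $(\mu_{c_1}(D,D),\infty)$.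
   Context: Standing setup. Let $D>0$, $\gamma_1>0$, $\gamma_2>0$ be constants and $\mu>0$ a parameter. Let $f_1,f_2:[0,\infty)\to[0,\infty)$ be continuously differentiable and bounded, with $f_i(0)=0$, $f_i'(x)>0$ for all $x\ge 0$, $\lim_{N\to\infty}f_1(N)>D/\gamma_1$ and $\lim_{P\to\infty}f_2(P)>D/\gamma_2$. Here $D_1=D_2=D$, so the system $( * )$ is $$\frac{dN}{dt}=(\mu-N)D-Pf_1(N),\quad \frac{dP}{dt}=\gamma_1Pf_1(N)-DP-Zf_2(P),\quad \frac{dZ}{dt}=\gamma_2Zf_2(P)-DZ.$$ $\lambda_P(D)$ is the unique number with $f_1(\lambda_P(D))=D/\gamma_1$, $\lambda_Z(D)$ the unique number with $f_2(\lambda_Z(D))=D/\gamma_2$, and $\mu_{c_1}(D,D)=\lambda_P(D)+\lambda_Z(D)/\gamma_1$. For $\mu>\mu_{c_1}(D,D)$, $N(\mu,D,D)$ is the unique solution $N\in(0,\mu)$ of $(\mu-N)D-\lambda_Z(D)f_1(N)=0$, $Z(\mu,D,D)=(\gamma_2/D)\lambda_Z(D)\bigl(\gamma_1f_1(N(\mu,D,D))-D\bigr)>0$, and $E_2(\mu)=(N(\mu,D,D),\lambda_Z(D),Z(\mu,D,D))$ is the coexistence equilibrium. *)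

theory Defs
  imports "HOL-Analysis.Analysis"
begin

definition lamP :: "(real \<Rightarrow> real) \<Rightarrow> real \<Rightarrow> real \<Rightarrow> real" where
  "lamP f1 \<gamma>1 D = (THE x. 0 \<le> x \<and> f1 x = D / \<gamma>1)"

definition lamZ :: "(real \<Rightarrow> real) \<Rightarrow> real \<Rightarrow> real \<Rightarrow> real" where
  "lamZ f2 \<gamma>2 D = (THE x. 0 \<le> x \<and> f2 x = D / \<gamma>2)"

definition muc1 :: "(real \<Rightarrow> real) \<Rightarrow> (real \<Rightarrow> real) \<Rightarrow> real \<Rightarrow> real \<Rightarrow> real \<Rightarrow> real" where
  "muc1 f1 f2 \<gamma>1 \<gamma>2 D = lamP f1 \<gamma>1 D + lamZ f2 \<gamma>2 D / \<gamma>1"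

definition Neq :: "(real \<Rightarrow> real) \<Rightarrow> (real \<Rightarrow> real) \<Rightarrow> real \<Rightarrow> real \<Rightarrow> real \<Rightarrow> real" where
  "Neq f1 f2 \<gamma>2 D \<mu> = (THE N. 0 < N \<and> N < \<mu> \<and> (\<mu> - N) * D - lamZ f2 \<gamma>2 D * f1 N = 0)"

definition Zeq :: "(real \<Rightarrow> real) \<Rightarrow> (real \<Rightarrow> real) \<Rightarrow> real \<Rightarrow> real \<Rightarrow> real \<Rightarrow> real \<Rightarrow> real" where
  "Zeq f1 f2 \<gamma>1 \<gamma>2 D \<mu> =
     (\<gamma>2 / D) * lamZ f2 \<gamma>2 D * (\<gamma>1 * f1 (Neq f1 f2 \<gamma>2 D \<mu>) - D)"

text \<open>Jacobian of the vector field
  (N,P,Z) \<mapsto> ((mu-N)D - P f1 N, \<gamma>1 P f1 N - D P - Z f2 P, \<gamma>2 Z f2 P - D Z)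
  at the point (N,P,Z), written via the derivatives f1', f2' and viewed as a complex matrix.\<close>
definition jac :: "(real \<Rightarrow> real) \<Rightarrow> (real \<Rightarrow> real) \<Rightarrow> (real \<Rightarrow> real) \<Rightarrow> (real \<Rightarrow> real)
                   \<Rightarrow> real \<Rightarrow> real \<Rightarrow> real \<Rightarrow> real \<Rightarrow> real \<Rightarrow> real \<Rightarrow> complex^3^3" where
  "jac f1 f2 f1' f2' \<gamma>1 \<gamma>2 D N P Z =
     vector [
       vector [complex_of_real (- D - P * f1' N), complex_of_real (- f1 N), 0],
       vector [complex_of_real (\<gamma>1 * P * f1' N),
               complex_of_real (\<gamma>1 * f1 N - D - Z * f2' P), complex_of_real (- f2 P)],
       vector [0, complex_of_real (\<gamma>2 * Z * f2' P), complex_of_real (\<gamma>2 * f2 P - D)]]"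

definition JE2 :: "(real \<Rightarrow> real) \<Rightarrow> (real \<Rightarrow> real) \<Rightarrow> (real \<Rightarrow> real) \<Rightarrow> (real \<Rightarrow> real)
                   \<Rightarrow> real \<Rightarrow> real \<Rightarrow> real \<Rightarrow> real \<Rightarrow> complex^3^3" where
  "JE2 f1 f2 f1' f2' \<gamma>1 \<gamma>2 D \<mu> =
     jac f1 f2 f1' f2' \<gamma>1 \<gamma>2 D (Neq f1 f2 \<gamma>2 D \<mu>) (lamZ f2 \<gamma>2 D) (Zeq f1 f2 \<gamma>1 \<gamma>2 D \<mu>)"

definition charpoly :: "complex^'n::finite^'n \<Rightarrow> complex \<Rightarrow> complex" where
  "charpoly M x = det (M - mat x)"

definition eigenvalue :: "complex^'n::finite^'n \<Rightarrow> complex \<Rightarrow> bool" where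
  "eigenvalue M x \<longleftrightarrow> (\<exists>v. v \<noteq> 0 \<and> M *v v = x *s v)"


definition Acoef :: "(real \<Rightarrow> real) \<Rightarrow> (real \<Rightarrow> real) \<Rightarrow> (real \<Rightarrow> real) \<Rightarrow> (real \<Rightarrow> real)
                   \<Rightarrow> real \<Rightarrow> real \<Rightarrow> real \<Rightarrow> real \<Rightarrow> real" where
  "Acoef f1 f2 f1' f2' \<gamma>1 \<gamma>2 D \<mu> =
     Zeq f1 f2 \<gamma>1 \<gamma>2 D \<mu> * (D / (\<gamma>2 * lamZ f2 \<gamma>2 D) - f2' (lamZ f2 \<gamma>2 D))
     - lamZ f2 \<gamma>2 D * f1' (Neq f1 f2 \<gamma>2 D \<mu>)"

definition Bcoef :: "(real \<Rightarrow> real) \<Rightarrow> (real \<Rightarrow> real) \<Rightarrow> (real \<Rightarrow> real)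
                   \<Rightarrow> real \<Rightarrow> real \<Rightarrow> real \<Rightarrow> real" where
  "Bcoef f1 f2 f1' \<gamma>2 D \<mu> = - (lamZ f2 \<gamma>2 D * f1' (Neq f1 f2 \<gamma>2 D \<mu>) + D) / \<gamma>2"

definition Ccoef :: "(real \<Rightarrow> real) \<Rightarrow> (real \<Rightarrow> real) \<Rightarrow> (real \<Rightarrow> real)
                   \<Rightarrow> real \<Rightarrow> real \<Rightarrow> real \<Rightarrow> real \<Rightarrow> real" where
  "Ccoef f1 f2 f2' \<gamma>1 \<gamma>2 D \<mu> = \<gamma>2 * Zeq f1 f2 \<gamma>1 \<gamma>2 D \<mu> * f2' (lamZ f2 \<gamma>2 D)"

end

theory Submission
  imports Defs
begin

text \<open>The quantity \<open>N + P/\<gamma>1 + Z/(\<gamma>1 \<gamma>2)\<close> relaxes to \<open>\<mu>\<close> at rate \<open>D\<close>, which produces the eigenvalue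
  \<open>-D\<close>; the remaining quadratic factor has discriminant \<open>A\<^sup>2 + 4BC\<close> with \<open>BC < 0\<close> at every
  coexistence equilibrium, so near a zero of \<open>A\<close> its roots are a nonreal pair with real part
  \<open>A/2\<close>, purely imaginary at the zero itself.
  The equilibrium equation gives \<open>\<mu> = N + \<lambda>\<^sub>Z f1(N)/D\<close>, strictly increasing in \<open>N\<close>, so \<open>A(\<mu>)\<close>
  is \<open>a(N(\<mu>))\<close> with \<open>a(N) = Z(N) c - \<lambda>\<^sub>Z f1'(N)\<close>, \<open>c = D/(\<gamma>2 \<lambda>\<^sub>Z) - f2'(\<lambda>\<^sub>Z)\<close>.
  At \<open>N = \<lambda>\<^sub>P\<close> we have \<open>Z = 0\<close> and \<open>a < 0\<close>; for \<open>c > 0\<close> the term \<open>Z(N) c\<close> grows while \<open>f1'\<close>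
  cannot stay bounded away from \<open>0\<close> because \<open>f1\<close> is bounded, so \<open>a\<close> changes sign.
  If \<open>f1'' < 0\<close>, then \<open>a\<close> and hence \<open>A\<close> is strictly increasing, giving transversality and
  uniqueness of the zero.\<close>

lemma charpoly_jac:
  fixes f1 f2 f1' f2' :: "real \<Rightarrow> real" and D g1 g2 lZ N :: real and x :: complex
  assumes D: "D \<noteq> 0" and g2: "g2 \<noteq> 0" and lZ: "lZ \<noteq> 0" and f2_lZ: "f2 lZ = D / g2"
  defines "Z \<equiv> (g2 / D) * lZ * (g1 * f1 N - D)"
  shows "charpoly (jac f1 f2 f1' f2' g1 g2 D N lZ Z) x =
     (- of_real D - x) * (x\<^sup>2 - of_real (Z * (D / (g2 * lZ) - f2' lZ) - lZ * f1' N) * x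
       - of_real ((- (lZ * f1' N + D) / g2) * (g2 * Z * f2' lZ)))"
proof -
  have A: "Z * (D / (g2 * lZ) - f2' lZ) - lZ * f1' N = g1 * f1 N - D - Z * f2' lZ - lZ * f1' N"
    using D g2 lZ unfolding Z_def by (simp add: field_simps)
  have BC: "(- (lZ * f1' N + D) / g2) * (g2 * Z * f2' lZ) = - (lZ * f1' N + D) * Z * f2' lZ"
    using g2 by (simp add: field_simps)
  have f2_entries: "g2 * f2 lZ - D = 0" "- f2 lZ = - D / g2" using g2 f2_lZ by simp_all
  show ?thesis
    unfolding charpoly_def jac_def det_3 A BC
    using g2 by (simp add: mat_def f2_entries power2_eq_square) (simp add: algebra_simps)
qed

lemma quadratic_conj_roots:
  fixes A P w :: real
  assumes "w\<^sup>2 = - (A\<^sup>2 + 4 * P) / 4"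
  shows "(of_real (A/2) + \<i> * of_real w)\<^sup>2 - of_real A * (of_real (A/2) + \<i> * of_real w) - of_real P = 0"
    and "(of_real (A/2) - \<i> * of_real w)\<^sup>2 - of_real A * (of_real (A/2) - \<i> * of_real w) - of_real P = 0"
  using assms by (simp_all add: complex_eq_iff power2_eq_square algebra_simps)

lemma matrix_vector_mult_mat: "mat (x::complex) *v (v::complex^'n) = x *s v"
proof -
  have "(\<Sum>j\<in>UNIV. (if i = j then x else 0) * v $ j) = x * v $ i" for i
    by (simp add: if_distrib[of "\<lambda>t. t * _"] cong: if_cong)
  then show ?thesis by (simp add: vec_eq_iff matrix_vector_mult_def mat_def)
qed

lemma eigenvalue_if_charpoly_eq_0:
  fixes M :: "complex^'n::finite^'n"
  assumes "charpoly M x = 0"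
  shows "eigenvalue M x"
proof -
  have "\<not> inj ((*v) (M - mat x))"
    using det_nz_iff_inj_gen[of "(*v) (M - mat x)"] assms
    by (simp add: charpoly_def matrix_vector_mul_linear_gen matrix_of_matrix_vector_mul)
  then obtain u w where "u \<noteq> w" "(M - mat x) *v u = (M - mat x) *v w" unfolding inj_def by blast
  then have kernel: "(M - mat x) *v (u - w) = 0" "u - w \<noteq> 0"
    by (simp_all add: matrix_vector_mult_diff_distrib)
  then have "M *v (u - w) = x *s (u - w)"
    unfolding matrix_vector_mult_diff_rdistrib matrix_vector_mult_mat by simp
  with kernel(2) show ?thesis unfolding eigenvalue_def by blast
qed

lemma has_real_derivative_at_if_within_nonneg:
  assumes "(f has_real_derivative f') (at x within {0..})" and "0 < x"
  shows "(f has_real_derivative f') (at x)"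
proof -
  have "at x within {0..} = at x" by (rule at_within_interior) (use assms(2) in simp)
  with assms(1) show ?thesis by simp
qed

lemma strict_mono_on_nonneg_if_deriv_pos:
  fixes f f' :: "real \<Rightarrow> real"
  assumes cont: "continuous_on {0..} f"
    and deriv: "\<And>x. 0 < x \<Longrightarrow> (f has_real_derivative f' x) (at x)"
    and pos: "\<And>x. 0 < x \<Longrightarrow> 0 < f' x"
  shows "strict_mono_on {0..} f"
proof (rule strict_mono_onI)
  fix x y :: real assume "x \<in> {0..}" "y \<in> {0..}" "x < y"
  show "f x < f y"
  proof (rule DERIV_pos_imp_increasing_open[OF \<open>x < y\<close>])
    fix z assume "x < z" "z < y"
    with \<open>x \<in> {0..}\<close> have "0 < z" by simp
    with deriv pos show "\<exists>l. (f has_real_derivative l) (at z) \<and> 0 < l" by blast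
  next
    show "continuous_on {x..y} f" using cont \<open>x \<in> {0..}\<close> by (auto intro: continuous_on_subset)
  qed
qed

lemma the_preimage_nonneg:
  fixes f :: "real \<Rightarrow> real"
  assumes cont: "continuous_on {0..} f" and mono: "strict_mono_on {0..} f"
    and "f 0 = 0" and "0 < v" and "0 \<le> b" and "v < f b"
  shows "0 < (THE x. 0 \<le> x \<and> f x = v) \<and> f (THE x. 0 \<le> x \<and> f x = v) = v"
proof -
  have "continuous_on {0..b} f" using cont by (auto intro: continuous_on_subset)
  then obtain x where x: "0 \<le> x" "f x = v"
    using IVT'[of f 0 v b] assms by auto
  have "(THE x. 0 \<le> x \<and> f x = v) = x"
    using x strict_mono_on_eq[OF mono] by (intro the_equality) auto
  moreover have "x \<noteq> 0" using x assms by auto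
  ultimately show ?thesis using x by auto
qed

lemma exists_above_limit:
  fixes f :: "real \<Rightarrow> real"
  assumes "(f \<longlongrightarrow> L) at_top" and "c < L"
  shows "\<exists>b\<ge>0. c < f b"
proof -
  obtain N where "\<forall>x\<ge>N. c < f x"
    using order_tendstoD(1)[OF assms] by (auto simp: eventually_at_top_linorder)
  then show ?thesis by (intro exI[of _ "max N 0"]) auto
qed

text \<open>Otherwise \<open>f x - \<delta> x\<close> would be nondecreasing on \<open>[a, \<infinity>)\<close>, forcing \<open>f\<close> to be unbounded.\<close>
lemma bounded_imp_deriv_less:
  fixes f f' :: "real \<Rightarrow> real"
  assumes bdd: "bounded (f ` {a..})"
    and deriv: "\<And>x. a \<le> x \<Longrightarrow> (f has_real_derivative f' x) (at x)"
    and "0 < \<delta>"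
  shows "\<exists>x\<ge>a. f' x < \<delta>"
proof (rule ccontr)
  assume "\<not> (\<exists>x\<ge>a. f' x < \<delta>)"
  then have big: "\<And>x. a \<le> x \<Longrightarrow> \<delta> \<le> f' x" by force
  obtain B where B: "\<And>x. a \<le> x \<Longrightarrow> \<bar>f x\<bar> \<le> B"
    using bdd unfolding bounded_iff by auto
  define x where "x = a + (B - f a + 1) / \<delta>"
  have "f a \<le> B" using B[of a] by simp
  then have "a \<le> x" unfolding x_def using \<open>0 < \<delta>\<close> by simp
  then have "f a - \<delta> * a \<le> f x - \<delta> * x"
  proof (rule DERIV_nonneg_imp_nondecreasing)
    fix y assume "a \<le> y" "y \<le> x"
    then show "\<exists>l. ((\<lambda>x. f x - \<delta> * x) has_real_derivative l) (at y) \<and> 0 \<le> l"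
      using deriv big by (auto intro!: derivative_eq_intros exI[of _ "f' y - \<delta>"])
  qed
  moreover have "\<delta> * x - \<delta> * a = B - f a + 1"
    unfolding x_def using \<open>0 < \<delta>\<close> by (simp add: field_simps)
  ultimately show False using B[OF \<open>a \<le> x\<close>] by linarith
qed

locale npz_chemostat =
  fixes f1 f2 f1' f2' :: "real \<Rightarrow> real" and D g1 g2 :: real
  assumes D_pos: "D > 0" and g1_pos: "g1 > 0" and g2_pos: "g2 > 0"
    and f1_deriv: "\<forall>x\<ge>0. (f1 has_real_derivative f1' x) (at x within {0..})"
    and f1'_cont: "continuous_on {0..} f1'"
    and f2_deriv: "\<forall>x\<ge>0. (f2 has_real_derivative f2' x) (at x within {0..})"
    and f1_bdd: "bounded (f1 ` {0..})"
    and f1_0: "f1 0 = 0" and f2_0: "f2 0 = 0"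
    and f1'_pos: "\<forall>x\<ge>0. f1' x > 0" and f2'_pos: "\<forall>x\<ge>0. f2' x > 0"
    and f1_lim: "\<exists>L. (f1 \<longlongrightarrow> L) at_top \<and> L > D / g1"
    and f2_lim: "\<exists>L. (f2 \<longlongrightarrow> L) at_top \<and> L > D / g2"
begin

abbreviation "lZ \<equiv> lamZ f2 g2 D"
abbreviation "lP \<equiv> lamP f1 g1 D"
abbreviation "Nmu \<equiv> Neq f1 f2 g2 D"
abbreviation "J \<equiv> JE2 f1 f2 f1' f2' g1 g2 D"
abbreviation "A \<equiv> Acoef f1 f2 f1' f2' g1 g2 D"
abbreviation "BC \<mu> \<equiv> Bcoef f1 f2 f1' g2 D \<mu> * Ccoef f1 f2 f2' g1 g2 D \<mu>"
abbreviation "disc \<mu> \<equiv> (A \<mu>)\<^sup>2 + 4 * BC \<mu>"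

text \<open>\<open>mu_of N\<close> is the input nutrient \<open>\<mu>\<close> for which \<open>N\<close> is the nutrient level of \<open>E2(\<mu>)\<close>;
  \<open>Z_of\<close> and \<open>A_of\<close> are \<open>Z\<close> and \<open>A\<close> as functions of that level.\<close>
abbreviation "mu_of N \<equiv> N + lZ * f1 N / D"
abbreviation "Z_of N \<equiv> (g2 / D) * lZ * (g1 * f1 N - D)"
abbreviation "c \<equiv> D / (g2 * lZ) - f2' lZ"
abbreviation "A_of N \<equiv> Z_of N * c - lZ * f1' N"

lemma f1_has_derivative: "0 < x \<Longrightarrow> (f1 has_real_derivative f1' x) (at x)"
  using f1_deriv has_real_derivative_at_if_within_nonneg by simp

lemma f2_has_derivative: "0 < x \<Longrightarrow> (f2 has_real_derivative f2' x) (at x)"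
  using f2_deriv has_real_derivative_at_if_within_nonneg by simp

lemma continuous_on_f1: "continuous_on {0..} f1"
  using f1_deriv by (auto simp: continuous_on_eq_continuous_within intro: DERIV_continuous)

lemma continuous_on_f2: "continuous_on {0..} f2"
  using f2_deriv by (auto simp: continuous_on_eq_continuous_within intro: DERIV_continuous)

lemma isCont_f1': "0 < x \<Longrightarrow> isCont f1' x"
  using continuous_on_interior[OF f1'_cont, of x] by simp

lemma strict_mono_on_f1: "strict_mono_on {0..} f1"
  using strict_mono_on_nonneg_if_deriv_pos[OF continuous_on_f1 f1_has_derivative] f1'_pos by simp

lemma strict_mono_on_f2: "strict_mono_on {0..} f2"
  using strict_mono_on_nonneg_if_deriv_pos[OF continuous_on_f2 f2_has_derivative] f2'_pos by simp

lemma f1_pos: "0 < x \<Longrightarrow> 0 < f1 x"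
  using strict_mono_onD[OF strict_mono_on_f1, of 0 x] f1_0 by simp

lemma lamZ: "0 < lZ" "f2 lZ = D / g2"
proof -
  obtain b where "0 \<le> b" "D / g2 < f2 b" using f2_lim exists_above_limit by blast
  from the_preimage_nonneg[OF continuous_on_f2 strict_mono_on_f2 f2_0 _ this] D_pos g2_pos
  show "0 < lZ" "f2 lZ = D / g2" unfolding lamZ_def by auto
qed

lemma lamP: "0 < lP" "f1 lP = D / g1"
proof -
  obtain b where "0 \<le> b" "D / g1 < f1 b" using f1_lim exists_above_limit by blast
  from the_preimage_nonneg[OF continuous_on_f1 strict_mono_on_f1 f1_0 _ this] D_pos g1_pos
  show "0 < lP" "f1 lP = D / g1" unfolding lamP_def by auto
qed

lemma strict_mono_on_mu_of: "strict_mono_on {0..} mu_of"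
proof (rule strict_mono_onI)
  fix x y :: real assume "x \<in> {0..}" "y \<in> {0..}" "x < y"
  then have "f1 x < f1 y" using strict_mono_onD[OF strict_mono_on_f1] by simp
  then have "lZ * f1 x / D \<le> lZ * f1 y / D"
    using lamZ D_pos by (simp add: divide_right_mono)
  with \<open>x < y\<close> show "mu_of x < mu_of y" by linarith
qed

lemma Neq_mu_of:
  assumes "0 < N"
  shows "Nmu (mu_of N) = N"
proof -
  have equilibrium: "(\<mu> - M) * D - lZ * f1 M = 0 \<longleftrightarrow> mu_of M = \<mu>" for M \<mu>
  proof -
    have "(\<mu> - M) * D - lZ * f1 M = D * (\<mu> - mu_of M)" using D_pos by (simp add: algebra_simps)
    then show ?thesis using D_pos by auto
  qed
  have "N < mu_of N" using f1_pos[OF assms] lamZ(1) D_pos by simp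
  show ?thesis
    unfolding Neq_def equilibrium
  proof (rule the_equality)
    fix M assume "0 < M \<and> M < mu_of N \<and> mu_of M = mu_of N"
    then show "M = N" using strict_mono_on_eq[OF strict_mono_on_mu_of, of M N] assms by simp
  qed (use assms \<open>N < mu_of N\<close> in simp)
qed

lemma Neq_inverse: "0 < \<mu> \<Longrightarrow> 0 < Nmu \<mu> \<and> mu_of (Nmu \<mu>) = \<mu>"
proof -
  assume "0 < \<mu>"
  have "continuous_on {0..\<mu>} mu_of"
    using continuous_on_f1 D_pos by (auto intro!: continuous_intros intro: continuous_on_subset)
  moreover have "\<mu> < mu_of \<mu>" using f1_pos[OF \<open>0 < \<mu>\<close>] lamZ D_pos by simp
  ultimately obtain N where N: "0 \<le> N" "mu_of N = \<mu>"
    using IVT'[of mu_of 0 \<mu> \<mu>] \<open>0 < \<mu>\<close> f1_0 by auto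
  with \<open>0 < \<mu>\<close> f1_0 have "0 < N" by (cases "N = 0") auto
  with N Neq_mu_of show ?thesis by auto
qed

lemma muc1_eq: "muc1 f1 f2 g1 g2 D = mu_of lP"
  unfolding muc1_def using lamP D_pos g1_pos by simp

lemma muc1_pos: "0 < muc1 f1 f2 g1 g2 D"
  unfolding muc1_eq using lamP lamZ g1_pos D_pos by (simp add: add_pos_pos)

lemma lamP_less_Neq: "muc1 f1 f2 g1 g2 D < \<mu> \<Longrightarrow> lP < Nmu \<mu>"
  using Neq_inverse[of \<mu>] muc1_pos lamP strict_mono_on_less[OF strict_mono_on_mu_of, of lP "Nmu \<mu>"]
  by (simp add: muc1_eq)

lemma isCont_Neq: "0 < \<mu> \<Longrightarrow> isCont Nmu \<mu>"
proof -
  assume "0 < \<mu>"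
  define N where "N = Nmu \<mu>"
  have N: "0 < N" "mu_of N = \<mu>" using Neq_inverse[OF \<open>0 < \<mu>\<close>] N_def by auto
  have "isCont Nmu (mu_of N)"
  proof (rule isCont_inverse_function[where d = "N / 2" and f = mu_of])
    fix z assume "\<bar>z - N\<bar> \<le> N / 2"
    then have "0 < z" using N(1) by linarith
    then show "Nmu (mu_of z) = z" and "isCont mu_of z"
      using Neq_mu_of DERIV_isCont[OF f1_has_derivative] D_pos by (auto intro!: continuous_intros)
  qed (use N in simp)
  with N show ?thesis by simp
qed

lemma DERIV_Neq:
  "0 < \<mu> \<Longrightarrow> (Nmu has_real_derivative inverse (1 + lZ * f1' (Nmu \<mu>) / D)) (at \<mu>)"
proof -
  assume "0 < \<mu>"
  then have "0 < Nmu \<mu>" using Neq_inverse by blast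
  show ?thesis
  proof (rule DERIV_inverse_function[where f = mu_of and a = 0 and b = "\<mu> + 1"])
    show "(mu_of has_real_derivative 1 + lZ * f1' (Nmu \<mu>) / D) (at (Nmu \<mu>))"
      using f1_has_derivative[OF \<open>0 < Nmu \<mu>\<close>] D_pos by (auto intro!: derivative_eq_intros)
    have "0 < lZ * f1' (Nmu \<mu>) / D" using f1'_pos \<open>0 < Nmu \<mu>\<close> lamZ D_pos by simp
    then show "1 + lZ * f1' (Nmu \<mu>) / D \<noteq> 0" by linarith
  qed (use \<open>0 < \<mu>\<close> Neq_inverse isCont_Neq in auto)
qed

lemma Acoef_eq: "A \<mu> = A_of (Nmu \<mu>)"
  unfolding Acoef_def Zeq_def by (rule refl)

lemma Z_of_pos: "lP < N \<Longrightarrow> 0 < Z_of N"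
proof -
  assume "lP < N"
  with lamP(1) have "f1 lP < f1 N" by (intro strict_mono_onD[OF strict_mono_on_f1]) auto
  then have "0 < g1 * f1 N - D" using lamP(2) g1_pos by (simp add: field_simps)
  then show ?thesis using lamZ(1) D_pos g2_pos by simp
qed

lemma A_of_lamP_neg: "A_of lP < 0"
proof -
  have "Z_of lP = 0" using lamP(2) g1_pos by simp
  then have "A_of lP = - (lZ * f1' lP)" by (simp only: mult_zero_left diff_0)
  moreover have "0 < lZ * f1' lP" using lamP(1) lamZ(1) f1'_pos by simp
  ultimately show ?thesis by linarith
qed

lemma ex_A_of_pos:
  assumes "0 < c"
  shows "\<exists>N>lP. 0 < A_of N"
proof -
  define N0 where "N0 = lP + 1"
  have "lP < N0" "0 < N0" using lamP unfolding N0_def by auto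
  then have "0 < Z_of N0" using Z_of_pos by blast
  have "bounded (f1 ` {N0..})"
    using f1_bdd by (rule bounded_subset) (use \<open>0 < N0\<close> in auto)
  moreover have "(f1 has_real_derivative f1' x) (at x)" if "N0 \<le> x" for x
    using f1_has_derivative \<open>0 < N0\<close> that by simp
  moreover have "0 < Z_of N0 * c / lZ"
    using \<open>0 < Z_of N0\<close> assms lamZ(1) by (rule divide_pos_pos[OF mult_pos_pos])
  ultimately obtain N where N: "N0 \<le> N" "f1' N < Z_of N0 * c / lZ"
    using bounded_imp_deriv_less by blast
  with lamZ(1) have "f1' N * lZ < Z_of N0 * c" by (simp only: pos_less_divide_eq)
  then have "lZ * f1' N < Z_of N0 * c" by (simp only: mult.commute)
  moreover have "f1 N0 \<le> f1 N"
    using N(1) \<open>0 < N0\<close> strict_mono_on_less_eq[OF strict_mono_on_f1] by simp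
  then have "Z_of N0 \<le> Z_of N"
    using lamZ(1) D_pos g1_pos g2_pos by (intro mult_left_mono) simp_all
  then have "Z_of N0 * c \<le> Z_of N * c"
    using assms by (rule mult_right_mono[OF _ less_imp_le])
  ultimately have "0 < A_of N" by linarith
  with N(1) \<open>lP < N0\<close> show ?thesis by (intro exI[of _ N]) simp
qed

lemma isCont_A_of: "0 < N \<Longrightarrow> isCont A_of N"
  by (intro continuous_intros DERIV_isCont[OF f1_has_derivative] isCont_f1')
    (use D_pos g2_pos lamZ(1) in auto)

lemma Acoef_has_zero:
  assumes "0 < c"
  shows "\<exists>\<mu>>muc1 f1 f2 g1 g2 D. A \<mu> = 0"
proof -
  obtain N2 where N2: "lP < N2" "0 < A_of N2" using ex_A_of_pos[OF assms] by blast
  have "continuous_on {lP..N2} A_of"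
    using lamP(1) isCont_A_of by (intro continuous_at_imp_continuous_on) auto
  then obtain N where N: "lP \<le> N" "A_of N = 0"
    using IVT'[of A_of lP 0 N2] A_of_lamP_neg N2 by auto
  with A_of_lamP_neg have "lP < N" by (cases "N = lP") auto
  then have "mu_of lP < mu_of N"
    using lamP(1) by (intro strict_mono_onD[OF strict_mono_on_mu_of]) auto
  moreover have "Nmu (mu_of N) = N" using \<open>lP < N\<close> lamP(1) Neq_mu_of by simp
  ultimately show ?thesis using N(2) unfolding Acoef_eq muc1_eq by auto
qed

lemma charpoly_JE2:
  "charpoly (J \<mu>) x = (- of_real D - x) * (x\<^sup>2 - of_real (A \<mu>) * x - of_real (BC \<mu>))"
  unfolding JE2_def Acoef_def Bcoef_def Ccoef_def Zeq_def
  using charpoly_jac[of D g2 lZ f2 f1 f1' f2' g1 "Nmu \<mu>" x] D_pos g2_pos lamZ by simp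

lemma eigenvalue_minus_D: "eigenvalue (J \<mu>) (- of_real D)"
  by (rule eigenvalue_if_charpoly_eq_0) (simp add: charpoly_JE2)

lemma eigenvalue_conj_pair:
  assumes "disc \<mu> < 0"
  shows "\<exists>\<omega>::real. \<omega> \<noteq> 0
    \<and> eigenvalue (J \<mu>) (of_real (A \<mu> / 2) + \<i> * of_real \<omega>)
    \<and> eigenvalue (J \<mu>) (of_real (A \<mu> / 2) - \<i> * of_real \<omega>)"
proof -
  define \<omega> where "\<omega> = sqrt (- disc \<mu>) / 2"
  have \<omega>2: "\<omega>\<^sup>2 = - disc \<mu> / 4"
    unfolding \<omega>_def using assms by (simp add: power_divide)
  have "\<omega> \<noteq> 0" unfolding \<omega>_def using assms by simp
  moreover have "eigenvalue (J \<mu>) (of_real (A \<mu> / 2) + \<i> * of_real \<omega>)"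
    by (rule eigenvalue_if_charpoly_eq_0) (simp only: charpoly_JE2 quadratic_conj_roots(1)[OF \<omega>2] mult_zero_right)
  moreover have "eigenvalue (J \<mu>) (of_real (A \<mu> / 2) - \<i> * of_real \<omega>)"
    by (rule eigenvalue_if_charpoly_eq_0) (simp only: charpoly_JE2 quadratic_conj_roots(2)[OF \<omega>2] mult_zero_right)
  ultimately show ?thesis by blast
qed

lemma BC_neg:
  assumes "muc1 f1 f2 g1 g2 D < \<mu>"
  shows "BC \<mu> < 0"
proof -
  have "lP < Nmu \<mu>" using lamP_less_Neq[OF assms] .
  then have "0 < lZ * f1' (Nmu \<mu>)" using lamP(1) lamZ(1) f1'_pos by simp
  then have "Bcoef f1 f2 f1' g2 D \<mu> < 0"
    unfolding Bcoef_def using D_pos g2_pos by (intro divide_neg_pos) simp_all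
  moreover have "0 < Ccoef f1 f2 f2' g1 g2 D \<mu>"
    using mult_pos_pos[OF mult_pos_pos[OF g2_pos Z_of_pos[OF \<open>lP < Nmu \<mu>\<close>]]] f2'_pos lamZ(1)
    by (simp add: Ccoef_def Zeq_def)
  ultimately show ?thesis by (simp add: mult_neg_pos)
qed

lemma isCont_disc: "0 < \<mu> \<Longrightarrow> isCont (\<lambda>\<mu>. disc \<mu>) \<mu>"
proof -
  assume "0 < \<mu>"
  then have "0 < Nmu \<mu>" using Neq_inverse by blast
  have "(\<lambda>\<mu>. disc \<mu>) = (\<lambda>\<mu>. (\<lambda>N. (A_of N)\<^sup>2 + 4 * ((- (lZ * f1' N + D) / g2) * (g2 * Z_of N * f2' lZ))) (Nmu \<mu>))"
    by (simp only: Acoef_def Bcoef_def Ccoef_def Zeq_def)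
  moreover have "isCont (\<lambda>N. (A_of N)\<^sup>2 + 4 * ((- (lZ * f1' N + D) / g2) * (g2 * Z_of N * f2' lZ))) (Nmu \<mu>)"
    by (intro continuous_intros DERIV_isCont[OF f1_has_derivative] isCont_f1')
      (use \<open>0 < Nmu \<mu>\<close> D_pos g2_pos lamZ(1) in auto)
  ultimately show ?thesis using isCont_o2[OF isCont_Neq[OF \<open>0 < \<mu>\<close>]] by simp
qed

lemma disc_neg_if_Acoef_eq_0:
  assumes "muc1 f1 f2 g1 g2 D < \<mu>" and "A \<mu> = 0"
  shows "disc \<mu> < 0"
  using BC_neg[OF assms(1)] assms(2) by simp

lemma eigenvalues_near_zero_of_Acoef:
  assumes "muc1 f1 f2 g1 g2 D < \<mu>0" and "A \<mu>0 = 0"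
  shows "\<exists>\<epsilon>>0. muc1 f1 f2 g1 g2 D \<le> \<mu>0 - \<epsilon> \<and>
    (\<forall>\<mu>. \<bar>\<mu> - \<mu>0\<bar> < \<epsilon> \<longrightarrow> eigenvalue (J \<mu>) (- of_real D)
      \<and> (\<exists>\<omega>::real. \<omega> \<noteq> 0
          \<and> eigenvalue (J \<mu>) (of_real (A \<mu> / 2) + \<i> * of_real \<omega>)
          \<and> eigenvalue (J \<mu>) (of_real (A \<mu> / 2) - \<i> * of_real \<omega>)))"
proof -
  have "disc \<mu>0 < 0" using disc_neg_if_Acoef_eq_0[OF assms] .
  moreover have "0 < \<mu>0" using muc1_pos assms(1) by linarith
  then have "(\<lambda>\<mu>. disc \<mu>) \<midarrow>\<mu>0\<rightarrow> disc \<mu>0" using isCont_disc by (simp add: isCont_def)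
  ultimately obtain r where "0 < r" and r: "\<forall>\<mu>. \<mu> \<noteq> \<mu>0 \<and> \<bar>\<mu>0 - \<mu>\<bar> < r \<longrightarrow> disc \<mu> < 0"
    using LIM_fun_less_zero by blast
  define \<epsilon> where "\<epsilon> = min r (\<mu>0 - muc1 f1 f2 g1 g2 D)"
  have "0 < \<epsilon>" and "muc1 f1 f2 g1 g2 D \<le> \<mu>0 - \<epsilon>"
    using \<open>0 < r\<close> assms(1) unfolding \<epsilon>_def by auto
  moreover have "disc \<mu> < 0" if "\<bar>\<mu> - \<mu>0\<bar> < \<epsilon>" for \<mu>
  proof (cases "\<mu> = \<mu>0")
    case False
    with r that show ?thesis unfolding \<epsilon>_def by (simp add: abs_minus_commute)
  qed (use \<open>disc \<mu>0 < 0\<close> in simp)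
  ultimately show ?thesis using eigenvalue_minus_D eigenvalue_conj_pair by blast
qed

lemma eigenvalue_imaginary_pair:
  assumes "muc1 f1 f2 g1 g2 D < \<mu>0" and "A \<mu>0 = 0"
  shows "\<exists>\<omega>::real. \<omega> \<noteq> 0 \<and> eigenvalue (J \<mu>0) (\<i> * of_real \<omega>) \<and> eigenvalue (J \<mu>0) (- \<i> * of_real \<omega>)"
  using eigenvalue_conj_pair[OF disc_neg_if_Acoef_eq_0[OF assms]] assms(2) by simp

context
  fixes f1'' :: "real \<Rightarrow> real"
  assumes f1'_deriv: "\<forall>x\<ge>0. (f1' has_real_derivative f1'' x) (at x within {0..})"
begin

lemma DERIV_Acoef:
  assumes "0 < \<mu>"
  shows "(A has_real_derivative
    ((g2 / D) * lZ * g1 * f1' (Nmu \<mu>) * c - lZ * f1'' (Nmu \<mu>)) * inverse (1 + lZ * f1' (Nmu \<mu>) / D))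
    (at \<mu>)"
proof -
  have "0 < Nmu \<mu>" using Neq_inverse assms by blast
  then have "(f1' has_real_derivative f1'' (Nmu \<mu>)) (at (Nmu \<mu>))"
    using f1'_deriv by (intro has_real_derivative_at_if_within_nonneg) simp_all
  with f1_has_derivative[OF \<open>0 < Nmu \<mu>\<close>]
  have "(A_of has_real_derivative (g2 / D) * lZ * g1 * f1' (Nmu \<mu>) * c - lZ * f1'' (Nmu \<mu>)) (at (Nmu \<mu>))"
    using D_pos by (auto intro!: derivative_eq_intros)
  from DERIV_chain2[OF this DERIV_Neq[OF assms]] show ?thesis
    unfolding Acoef_eq[abs_def] .
qed

lemma Acoef_deriv_pos:
  assumes "0 < \<mu>" and "0 < c" and "f1'' (Nmu \<mu>) < 0"
  shows "\<exists>A'. (A has_real_derivative A') (at \<mu>) \<and> A' > 0"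
proof -
  have "0 < Nmu \<mu>" using Neq_inverse assms(1) by blast
  then have "0 < (g2 / D) * lZ * g1 * f1' (Nmu \<mu>) * c" and "0 < lZ * f1' (Nmu \<mu>) / D"
    using g2_pos D_pos lamZ(1) g1_pos f1'_pos assms(2) by simp_all
  moreover have "0 < - (lZ * f1'' (Nmu \<mu>))" using assms(3) lamZ(1) by (simp add: mult_pos_neg)
  ultimately have "0 < ((g2 / D) * lZ * g1 * f1' (Nmu \<mu>) * c - lZ * f1'' (Nmu \<mu>))
      * inverse (1 + lZ * f1' (Nmu \<mu>) / D)"
    by (intro mult_pos_pos) simp_all
  with DERIV_Acoef[OF assms(1)] show ?thesis by blast
qed

lemma Acoef_strict_mono:
  assumes "0 < c" and concave: "\<forall>x\<ge>0. f1'' x < 0" and "0 < x" "x < y"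
  shows "A x < A y"
proof (rule DERIV_pos_imp_increasing[OF \<open>x < y\<close>])
  fix z assume "x \<le> z" "z \<le> y"
  with \<open>0 < x\<close> have "0 < z" by simp
  moreover from this have "f1'' (Nmu z) < 0" using Neq_inverse[of z] concave by simp
  ultimately show "\<exists>l. (A has_real_derivative l) (at z) \<and> 0 < l"
    using assms(1) by (intro Acoef_deriv_pos)
qed

lemma Acoef_zero_unique:
  assumes "0 < c" and concave: "\<forall>x\<ge>0. f1'' x < 0"
    and "0 < \<mu>" "0 < \<mu>'" and "A \<mu> = 0" "A \<mu>' = 0"
  shows "\<mu> = \<mu>'"
  using Acoef_strict_mono[OF assms(1,2), of \<mu> \<mu>'] Acoef_strict_mono[OF assms(1,2), of \<mu>' \<mu>] assms(3-6)
  by (cases \<mu> \<mu>' rule: linorder_cases) simp_all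

end

end

theorem theorem3p5:
  fixes f1 f2 f1' f2' :: "real \<Rightarrow> real" and D \<gamma>1 \<gamma>2 :: real
  assumes D_pos: "D > 0" and g1_pos: "\<gamma>1 > 0" and g2_pos: "\<gamma>2 > 0"
    and f1_deriv: "\<forall>x\<ge>0. (f1 has_real_derivative f1' x) (at x within {0..})"
    and f1'_cont: "continuous_on {0..} f1'"
    and f2_deriv: "\<forall>x\<ge>0. (f2 has_real_derivative f2' x) (at x within {0..})"
    and f2'_cont: "continuous_on {0..} f2'"
    and f1_nonneg: "\<forall>x\<ge>0. f1 x \<ge> 0" and f2_nonneg: "\<forall>x\<ge>0. f2 x \<ge> 0"
    and f1_bdd: "bounded (f1 ` {0..})" and f2_bdd: "bounded (f2 ` {0..})"
    and f1_0: "f1 0 = 0" and f2_0: "f2 0 = 0"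
    and f1'_pos: "\<forall>x\<ge>0. f1' x > 0" and f2'_pos: "\<forall>x\<ge>0. f2' x > 0"
    and f1_lim: "\<exists>L. (f1 \<longlongrightarrow> L) at_top \<and> L > D / \<gamma>1"
    and f2_lim: "\<exists>L. (f2 \<longlongrightarrow> L) at_top \<and> L > D / \<gamma>2"
  shows
    "(\<forall>\<mu>>muc1 f1 f2 \<gamma>1 \<gamma>2 D. \<forall>x::complex.
        charpoly (JE2 f1 f2 f1' f2' \<gamma>1 \<gamma>2 D \<mu>) x
        = (- of_real D - x) * (x\<^sup>2 - of_real (Acoef f1 f2 f1' f2' \<gamma>1 \<gamma>2 D \<mu>) * x
             - of_real (Bcoef f1 f2 f1' \<gamma>2 D \<mu> * Ccoef f1 f2 f2' \<gamma>1 \<gamma>2 D \<mu>)))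
     \<and> (D / (\<gamma>2 * lamZ f2 \<gamma>2 D) > f2' (lamZ f2 \<gamma>2 D) \<longrightarrow>
        (\<exists>\<mu>c2 > muc1 f1 f2 \<gamma>1 \<gamma>2 D.
           Acoef f1 f2 f1' f2' \<gamma>1 \<gamma>2 D \<mu>c2 = 0
         \<and> eigenvalue (JE2 f1 f2 f1' f2' \<gamma>1 \<gamma>2 D \<mu>c2) (- of_real D)
         \<and> (\<exists>\<omega>::real. \<omega> \<noteq> 0
              \<and> eigenvalue (JE2 f1 f2 f1' f2' \<gamma>1 \<gamma>2 D \<mu>c2) (\<i> * of_real \<omega>)
              \<and> eigenvalue (JE2 f1 f2 f1' f2' \<gamma>1 \<gamma>2 D \<mu>c2) (- \<i> * of_real \<omega>))
         \<and> (\<exists>\<epsilon>>0. muc1 f1 f2 \<gamma>1 \<gamma>2 D \<le> \<mu>c2 - \<epsilon> \<and>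
              (\<forall>\<mu>. \<bar>\<mu> - \<mu>c2\<bar> < \<epsilon> \<longrightarrow>
                 eigenvalue (JE2 f1 f2 f1' f2' \<gamma>1 \<gamma>2 D \<mu>) (- of_real D)
               \<and> (\<exists>\<omega>::real. \<omega> \<noteq> 0
                   \<and> eigenvalue (JE2 f1 f2 f1' f2' \<gamma>1 \<gamma>2 D \<mu>)
                       (of_real (Acoef f1 f2 f1' f2' \<gamma>1 \<gamma>2 D \<mu> / 2) + \<i> * of_real \<omega>)
                   \<and> eigenvalue (JE2 f1 f2 f1' f2' \<gamma>1 \<gamma>2 D \<mu>)
                       (of_real (Acoef f1 f2 f1' f2' \<gamma>1 \<gamma>2 D \<mu> / 2) - \<i> * of_real \<omega>))))
         \<and> (\<forall>f1'' :: real \<Rightarrow> real.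
              (\<forall>x\<ge>0. (f1' has_real_derivative f1'' x) (at x within {0..})) \<longrightarrow>
                 (f1'' (Neq f1 f2 \<gamma>2 D \<mu>c2) < 0 \<longrightarrow>
                    (\<exists>A'. (Acoef f1 f2 f1' f2' \<gamma>1 \<gamma>2 D has_real_derivative A') (at \<mu>c2)
                          \<and> A' > 0))
               \<and> ((\<forall>x\<ge>0. f1'' x < 0) \<longrightarrow>
                    (\<forall>\<mu>>muc1 f1 f2 \<gamma>1 \<gamma>2 D. Acoef f1 f2 f1' f2' \<gamma>1 \<gamma>2 D \<mu> = 0 \<longrightarrow> \<mu> = \<mu>c2)))))"
proof -
  interpret npz_chemostat f1 f2 f1' f2' D \<gamma>1 \<gamma>2
    by unfold_locales (fact assms)+
  have pos: "0 < \<mu>" if "muc1 f1 f2 \<gamma>1 \<gamma>2 D < \<mu>" for \<mu>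
    using muc1_pos that by linarith
  show ?thesis
  proof (intro conjI impI, goal_cases)
    case 1
    show ?case using charpoly_JE2 by blast
  next
    case 2
    then have "0 < c" by simp
    then obtain \<mu>c2 where \<mu>c2: "muc1 f1 f2 \<gamma>1 \<gamma>2 D < \<mu>c2" "A \<mu>c2 = 0"
      using Acoef_has_zero by blast
    have unique: "\<mu> = \<mu>c2"
      if "\<forall>x\<ge>0. (f1' has_real_derivative f1'' x) (at x within {0..})" and "\<forall>x\<ge>0. f1'' x < 0"
        and "muc1 f1 f2 \<gamma>1 \<gamma>2 D < \<mu>" and "A \<mu> = 0" for f1'' \<mu>
      using Acoef_zero_unique[OF that(1) \<open>0 < c\<close> that(2) pos[OF that(3)] pos[OF \<mu>c2(1)] that(4) \<mu>c2(2)] .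
    show ?case
      using \<mu>c2 eigenvalue_minus_D eigenvalue_imaginary_pair[OF \<mu>c2] eigenvalues_near_zero_of_Acoef[OF \<mu>c2]
        Acoef_deriv_pos[OF _ pos[OF \<mu>c2(1)] \<open>0 < c\<close>] unique
      by (intro exI[of _ \<mu>c2]) blast
  qed
qed

end
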